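(* Let $r\ge2$ and let $\mathcal{P}$ be a set of $r$-patterns. Suppose there are constants $C>0$ and $0\le x<r$ such that $a_{\mathcal P}(k)\le C^{k}k^{kx}$ for all $k\ge2$. Then there is a constant $C''>0$ such that a.a.s. $z_{\mathcal{P}}(\mathbb{RM}^{(r)}_{n})\le C'' n^{1/(r-x)}$.
   Context: An ordered $r$-matching of size $k$ is a set of $k$ pairwise disjoint $r$-element subsets (edges) of a linearly ordered vertex set of size $rk$; $\mathcal{M}^{(r)}_k$ is the set of all ordered $r$-matchings on $[rk]$ and $\mathbb{RM}^{(r)}_n$ is a uniformly random element of $\mathcal{M}^{(r)}_n$. An $r$-pattern is an ordered $r$-matching of size 2 (written as a word over $\{A,B\}$, each letter $r$ times). Two edges form pattern $P$ if they induce a matching order-isomorphic to $P$. For a set $\mathcal P$ of $r$-patterns, a $\mathcal P$-clique is an ordered matching all of whose pairs of edges form patterns in $\mathcal P$; $z_{\mathcal P}(M)$ is the largest size of a $\mathcal P$-clique contained in $M$; $a_{\mathcal P}(k)$ is the number of $\mathcal P$-cliques in $\mathcal{M}^{(r)}_k$. "A.a.s." means with probability tending to 1 as $n\to\infty$. *)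

theory Defs
  imports Complex_Main
begin

definition ord_matchings :: "nat \<Rightarrow> nat \<Rightarrow> nat set set set" where
  "ord_matchings r k = {M. (\<forall>e\<in>M. card e = r) \<and> (\<forall>e\<in>M. \<forall>f\<in>M. e \<noteq> f \<longrightarrow> e \<inter> f = {}) \<and> \<Union>M = {0..<r*k} \<and> card M = k}"

definition r_patterns :: "nat \<Rightarrow> nat set set set" where
  "r_patterns r = ord_matchings r 2"

text \<open>The pattern formed by two edges e, f: the matching {e,f} transported to
  {0..<|e \<union> f|} by the unique order-preserving bijection i \<mapsto> #{j \<in> e \<union> f. j < i}.\<close>
definition pattern_of :: "nat set \<Rightarrow> nat set \<Rightarrow> nat set set" where
  "pattern_of e f = (\<lambda>S. (\<lambda>i. card {j \<in> e \<union> f. j < i}) ` S) ` {e, f}"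

definition is_clique :: "nat set set set \<Rightarrow> nat set set \<Rightarrow> bool" where
  "is_clique P N \<longleftrightarrow> (\<forall>e\<in>N. \<forall>f\<in>N. e \<noteq> f \<longrightarrow> pattern_of e f \<in> P)"

definition z_clique :: "nat set set set \<Rightarrow> nat set set \<Rightarrow> nat" where
  "z_clique P M = Max (card ` {N. N \<subseteq> M \<and> is_clique P N})"

definition a_clique :: "nat \<Rightarrow> nat set set set \<Rightarrow> nat \<Rightarrow> nat" where
  "a_clique r P k = card {M \<in> ord_matchings r k. is_clique P M}"

definition prob_RM :: "nat \<Rightarrow> nat \<Rightarrow> (nat set set \<Rightarrow> bool) \<Rightarrow> real" where
  "prob_RM r n Q = real (card {M \<in> ord_matchings r n. Q M}) / real (card (ord_matchings r n))"

end

theory Submission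
  imports Defs
begin

text \<open>First moment method. Sorting the pairs (M, N) of a matching M of {0..<r*n} and a k-edge
  sub-matching N by the vertex set of N gives
  |M(n)| * (n choose k) = (r*n choose r*k) * |M(k)| * |M(n-k)|,
  and the same count with N restricted to P-cliques shows that the expected number of P-cliques
  of size k in a random matching is a(k) * (n choose k) / |M(k)|. The case k = 1 of the identity
  gives |M(k)| \<ge> k!^(r-1); with (n choose k) \<le> n^k / k! and k^k \<le> e^k k! the expectation is at
  most (C e^r n / k^(r-x))^k, which is at most 2^-k once k \<ge> C'' n^(1/(r-x)).\<close>

definition matchings :: "nat \<Rightarrow> 'a set \<Rightarrow> 'a set set set" where
  "matchings r A = {M. (\<forall>e\<in>M. card e = r) \<and> (\<forall>e\<in>M. \<forall>f\<in>M. e \<noteq> f \<longrightarrow> e \<inter> f = {}) \<and> \<Union>M = A}"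

lemma matchings_edge_subset: "M \<in> matchings r A \<Longrightarrow> e \<in> M \<Longrightarrow> e \<subseteq> A"
  unfolding matchings_def by blast

lemma matching_edge_card: "M \<in> matchings r A \<Longrightarrow> e \<in> M \<Longrightarrow> card e = r"
  by (simp add: matchings_def)

lemma matching_edges_disjoint:
  "M \<in> matchings r A \<Longrightarrow> e \<in> M \<Longrightarrow> f \<in> M \<Longrightarrow> e \<noteq> f \<Longrightarrow> e \<inter> f = {}"
  by (simp add: matchings_def)

lemma matchings_subset_Pow: "matchings r A \<subseteq> Pow (Pow A)"
  unfolding matchings_def by blast

lemma finite_matchings: "finite A \<Longrightarrow> finite (matchings r A)"
  using matchings_subset_Pow by (rule finite_subset) simp

lemma card_ground_matching:
  assumes "finite A" "M \<in> matchings r A"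
  shows "card A = r * card M"
proof -
  have "pairwise disjnt M"
    using assms(2) unfolding matchings_def pairwise_def disjnt_def by blast
  moreover have "finite e" if "e \<in> M" for e
    using finite_subset[OF matchings_edge_subset[OF assms(2) that] assms(1)] .
  ultimately have "card (\<Union>M) = sum card M"
    by (rule card_Union_disjoint)
  also have "\<dots> = sum (\<lambda>_. r) M"
    using assms(2) by (intro sum.cong) (simp_all add: matchings_def)
  finally show ?thesis
    using assms(2) by (simp add: matchings_def)
qed

lemma ord_matchings_eq_matchings:
  assumes "r > 0"
  shows "ord_matchings r k = matchings r {0..<r*k}"
proof -
  have "card M = k" if "M \<in> matchings r {0..<r*k}" for M
    using card_ground_matching[OF finite_atLeastLessThan that] assms by simp
  then show ?thesis
    by (auto simp: ord_matchings_def matchings_def simp del: Union_iff)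
qed

lemma finite_ord_matchings: "finite (ord_matchings r k)"
  by (rule finite_subset[of _ "Pow (Pow {0..<r*k})"]) (auto simp: ord_matchings_def)

lemma finite_ord_matching: "M \<in> ord_matchings r k \<Longrightarrow> finite M"
  by (rule finite_subset[of _ "Pow {0..<r*k}"]) (auto simp: ord_matchings_def)

lemma matchings_image:
  assumes "inj_on h A" "M \<in> matchings r A"
  shows "image h ` M \<in> matchings r (h ` A)"
  unfolding matchings_def
proof (intro CollectI conjI ballI impI)
  fix e' assume "e' \<in> image h ` M"
  then obtain e where e: "e \<in> M" "e' = h ` e"
    by blast
  then have "card e' = card e"
    using card_image[OF inj_on_subset[OF assms(1) matchings_edge_subset[OF assms(2) e(1)]]]
    by simp
  then show "card e' = r"
    using matching_edge_card[OF assms(2) e(1)] by simp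
next
  fix e' f' assume "e' \<in> image h ` M" "f' \<in> image h ` M" "e' \<noteq> f'"
  then obtain e f where ef: "e \<in> M" "f \<in> M" "e \<noteq> f" "e' = h ` e" "f' = h ` f"
    by blast
  have "e \<inter> f = {}"
    by (rule matching_edges_disjoint[OF assms(2) ef(1-3)])
  moreover have "h ` e \<inter> h ` f = h ` (e \<inter> f)"
    using inj_on_image_Int[OF assms(1) matchings_edge_subset[OF assms(2) ef(1)]
        matchings_edge_subset[OF assms(2) ef(2)]] by simp
  ultimately show "e' \<inter> f' = {}"
    using ef by simp
next
  have "\<Union>M = A"
    using assms(2) by (simp add: matchings_def)
  then show "\<Union>(image h ` M) = h ` A"
    using image_Union[of h M] by simp
qed

lemma matchings_image_iff:
  assumes "inj_on h A" "M \<subseteq> Pow A"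
  shows "image h ` M \<in> matchings r (h ` A) \<longleftrightarrow> M \<in> matchings r A"
proof
  let ?g = "inv_into A h"
  have "image ?g ` image h ` M = (\<lambda>e. ?g ` h ` e) ` M"
    by (rule image_image)
  also have "\<dots> = M"
    using assms by (simp add: subset_eq)
  finally have M: "image ?g ` image h ` M = M" .
  have A: "?g ` h ` A = A"
    using assms(1) by simp
  assume "image h ` M \<in> matchings r (h ` A)"
  then have "image ?g ` image h ` M \<in> matchings r (?g ` h ` A)"
    by (rule matchings_image[OF inj_on_inv_into[OF subset_refl]])
  then show "M \<in> matchings r A"
    by (simp only: M A)
qed (rule matchings_image[OF assms(1)])

lemma card_matchings_bij_betw:
  assumes h: "bij_betw h A B" and Q: "\<And>M. M \<in> matchings r A \<Longrightarrow> Q' (image h ` M) = Q M"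
  shows "card {M \<in> matchings r B. Q' M} = card {M \<in> matchings r A. Q M}"
proof -
  have inj: "inj_on h A" and img: "h ` A = B"
    using h by (simp_all add: bij_betw_def)
  have hh: "bij_betw (image (image h)) (Pow (Pow A)) (Pow (Pow B))"
    using h by (intro bij_betw_Pow)
  have "image (image h) ` {M \<in> matchings r A. Q M} = {M \<in> matchings r B. Q' M}"
  proof (intro equalityI subsetI)
    fix M' assume "M' \<in> image (image h) ` {M \<in> matchings r A. Q M}"
    then obtain M where M: "M \<in> matchings r A" "Q M" "M' = image h ` M"
      by blast
    have "M' \<in> matchings r B"
      using matchings_image[OF inj M(1)] M(3) img by simp
    moreover have "Q' M'"
      using Q[OF M(1)] M by simp
    ultimately show "M' \<in> {M \<in> matchings r B. Q' M}"
      by simp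
  next
    fix M' assume M': "M' \<in> {M \<in> matchings r B. Q' M}"
    then have "M' \<in> Pow (Pow B)"
      using matchings_subset_Pow by blast
    then have "M' \<in> image (image h) ` Pow (Pow A)"
      using bij_betw_imp_surj_on[OF hh] by simp
    then obtain M where M: "M \<subseteq> Pow A" "M' = image h ` M"
      by blast
    then have "M \<in> matchings r A"
      using M' img matchings_image_iff[OF inj M(1), of r] by simp
    moreover have "Q M"
      using Q[OF \<open>M \<in> matchings r A\<close>] M M' by simp
    ultimately show "M' \<in> image (image h) ` {M \<in> matchings r A. Q M}"
      using M(2) by blast
  qed
  moreover have "inj_on (image (image h)) {M \<in> matchings r A. Q M}"
    by (rule inj_on_subset[OF bij_betw_imp_inj_on[OF hh]]) (use matchings_subset_Pow in blast)
  ultimately show ?thesis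
    using card_image by fastforce
qed

lemma matchings_Un:
  assumes N: "N \<in> matchings r S" and R: "R \<in> matchings r T" and "S \<inter> T = {}"
  shows "N \<union> R \<in> matchings r (S \<union> T)"
  unfolding matchings_def
proof (intro CollectI conjI ballI impI)
  fix e assume "e \<in> N \<union> R"
  then show "card e = r"
    using matching_edge_card[OF N] matching_edge_card[OF R] by blast
next
  have cross: "e \<inter> f = {}" if "e \<in> N" "f \<in> R" for e f
    using matchings_edge_subset[OF N that(1)] matchings_edge_subset[OF R that(2)] assms(3) by blast
  fix e f assume ef: "e \<in> N \<union> R" "f \<in> N \<union> R" "e \<noteq> f"
  then consider "e \<in> N" "f \<in> N" | "e \<in> N" "f \<in> R" | "e \<in> R" "f \<in> N" | "e \<in> R" "f \<in> R"
    by blast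
  then show "e \<inter> f = {}"
  proof cases
    case 1
    then show ?thesis using matching_edges_disjoint[OF N] ef(3) by blast
  next
    case 2
    then show ?thesis using cross by blast
  next
    case 3
    then show ?thesis using cross[of f e] by blast
  next
    case 4
    then show ?thesis using matching_edges_disjoint[OF R] ef(3) by blast
  qed
next
  show "\<Union>(N \<union> R) = S \<union> T"
    using N R by (simp add: matchings_def)
qed

lemma matching_subset: "M \<in> matchings r A \<Longrightarrow> N \<subseteq> M \<Longrightarrow> N \<in> matchings r (\<Union>N)"
  unfolding matchings_def by blast

lemma matchings_Diff:
  assumes M: "M \<in> matchings r A" and "N \<subseteq> M"
  shows "M - N \<in> matchings r (A - \<Union>N)"
  unfolding matchings_def
proof (intro CollectI conjI ballI impI)
  fix e assume "e \<in> M - N"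
  then show "card e = r"
    using matching_edge_card[OF M] by blast
next
  fix e f assume "e \<in> M - N" "f \<in> M - N" "e \<noteq> f"
  then show "e \<inter> f = {}"
    using matching_edges_disjoint[OF M] by blast
next
  show "\<Union>(M - N) = A - \<Union>N"
  proof (intro equalityI subsetI)
    fix u assume "u \<in> \<Union>(M - N)"
    then obtain e where e: "e \<in> M" "e \<notin> N" "u \<in> e"
      by blast
    have "u \<notin> f" if "f \<in> N" for f
      using matching_edges_disjoint[OF M e(1), of f] e that assms(2) by blast
    then show "u \<in> A - \<Union>N"
      using matchings_edge_subset[OF M e(1)] e(3) by blast
  next
    fix u assume u: "u \<in> A - \<Union>N"
    then obtain e where "e \<in> M" "u \<in> e"
      using M by (auto simp: matchings_def)
    then show "u \<in> \<Union>(M - N)"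
      using u by blast
  qed
qed

lemma matchings_disjoint:
  assumes "r > 0" "N \<in> matchings r S" "R \<in> matchings r T" "S \<inter> T = {}"
  shows "N \<inter> R = {}"
proof -
  have "e = {}" if "e \<in> N" "e \<in> R" for e
    using matchings_edge_subset[OF assms(2) that(1)] matchings_edge_subset[OF assms(3) that(2)]
      assms(4) by blast
  moreover have "e \<noteq> {}" if "e \<in> N" for e
    using assms(1,2) that by (auto simp: matchings_def)
  ultimately show ?thesis
    by blast
qed

lemma bij_betw_nth_sorted_list_of_set:
  "finite S \<Longrightarrow> bij_betw ((!) (sorted_list_of_set S)) {0..<card S} S"
  by (rule bij_betw_nth) (simp_all add: lessThan_atLeast0)

lemma strict_mono_on_nth_sorted_list_of_set:
  assumes "finite S"
  shows "strict_mono_on {0..<card S} ((!) (sorted_list_of_set S))"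
proof -
  have "sorted_wrt (<) (sorted_list_of_set S)"
    using assms by simp
  then show ?thesis
    unfolding strict_mono_on_def using assms sorted_wrt_nth_less by fastforce
qed

lemma pattern_of_strict_mono_image:
  assumes h: "strict_mono_on A h" and "e \<subseteq> A" "f \<subseteq> A"
  shows "pattern_of (h ` e) (h ` f) = pattern_of e f"
proof -
  let ?U = "e \<union> f"
  have rank: "card {j \<in> h ` e \<union> h ` f. j < h i} = card {j \<in> ?U. j < i}" if "i \<in> ?U" for i
  proof -
    have less: "h j < h i \<longleftrightarrow> j < i" if "j \<in> ?U" for j
      using strict_mono_on_less[OF h] \<open>i \<in> ?U\<close> that assms by blast
    have "{j \<in> h ` e \<union> h ` f. j < h i} = h ` {j \<in> ?U. j < i}"
    proof (intro equalityI subsetI)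
      fix y assume "y \<in> {j \<in> h ` e \<union> h ` f. j < h i}"
      then obtain j where "j \<in> ?U" "y = h j" "h j < h i"
        by blast
      then show "y \<in> h ` {j \<in> ?U. j < i}"
        using less by blast
    next
      fix y assume "y \<in> h ` {j \<in> ?U. j < i}"
      then show "y \<in> {j \<in> h ` e \<union> h ` f. j < h i}"
        using less by blast
    qed
    moreover have "inj_on h {j \<in> ?U. j < i}"
      by (rule inj_on_subset[OF strict_mono_on_imp_inj_on[OF h]]) (use assms in blast)
    ultimately show ?thesis
      by (simp add: card_image)
  qed
  have "(\<lambda>i. card {j \<in> h ` e \<union> h ` f. j < i}) ` h ` g = (\<lambda>i. card {j \<in> ?U. j < i}) ` g"
    if "g \<subseteq> ?U" for g
    unfolding image_image using rank that by (intro image_cong) auto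
  then show ?thesis
    unfolding pattern_of_def by simp
qed

text \<open>Invariance under order-preserving relabelling of the vertices: it lets sub-matchings on an
  arbitrary vertex set of size r*k be counted as matchings of {0..<r*k}.\<close>
definition order_invariant :: "(nat set set \<Rightarrow> bool) \<Rightarrow> bool" where
  "order_invariant Q \<longleftrightarrow> (\<forall>A h N. strict_mono_on A h \<longrightarrow> \<Union>N \<subseteq> A \<longrightarrow> Q (image h ` N) = Q N)"

lemma order_invariant_is_clique: "order_invariant (is_clique P)"
  unfolding order_invariant_def
proof (intro allI impI)
  fix A :: "nat set" and h :: "nat \<Rightarrow> nat" and N :: "nat set set"
  assume h: "strict_mono_on A h" and N: "\<Union>N \<subseteq> A"
  have sub: "e \<subseteq> A" if "e \<in> N" for e
    using N that by blast
  have inj: "h ` e = h ` f \<longleftrightarrow> e = f" if "e \<in> N" "f \<in> N" for e f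
    using inj_on_image_eq_iff[OF strict_mono_on_imp_inj_on[OF h] sub[OF that(1)] sub[OF that(2)]] .
  have "is_clique P (image h ` N)
      \<longleftrightarrow> (\<forall>e\<in>N. \<forall>f\<in>N. h ` e \<noteq> h ` f \<longrightarrow> pattern_of (h ` e) (h ` f) \<in> P)"
    unfolding is_clique_def by simp
  also have "\<dots> \<longleftrightarrow> (\<forall>e\<in>N. \<forall>f\<in>N. e \<noteq> f \<longrightarrow> pattern_of e f \<in> P)"
    using inj pattern_of_strict_mono_image[OF h sub sub] by simp
  finally show "is_clique P (image h ` N) = is_clique P N"
    unfolding is_clique_def .
qed

lemma card_matchings_order_invariant:
  assumes "finite S" "order_invariant Q"
  shows "card {N \<in> matchings r S. Q N} = card {N \<in> matchings r {0..<card S}. Q N}"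
proof (rule card_matchings_bij_betw[OF bij_betw_nth_sorted_list_of_set[OF assms(1)]])
  fix N assume "N \<in> matchings r {0..<card S}"
  then have "\<Union>N \<subseteq> {0..<card S}"
    by (simp add: matchings_def)
  then show "Q (image ((!) (sorted_list_of_set S)) ` N) = Q N"
    using assms(2) strict_mono_on_nth_sorted_list_of_set[OF assms(1)]
    unfolding order_invariant_def by blast
qed

lemma card_sub_matching_pairs_sum:
  assumes r: "r > 0" and U: "finite U"
  shows "card {(M, N). M \<in> matchings r U \<and> N \<subseteq> M \<and> card N = k \<and> Q N}
    = (\<Sum>S | S \<subseteq> U \<and> card S = r * k. card {N \<in> matchings r S. Q N} * card (matchings r (U - S)))"
proof -
  define Ss where "Ss = {S. S \<subseteq> U \<and> card S = r * k}"
  define Pairs where "Pairs = {(M, N). M \<in> matchings r U \<and> N \<subseteq> M \<and> card N = k \<and> Q N}"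
  define Parts where "Parts = Sigma Ss (\<lambda>S. {N \<in> matchings r S. Q N} \<times> matchings r (U - S))"
  have "bij_betw (\<lambda>(M, N). (\<Union>N, N, M - N)) Pairs Parts"
  proof (rule bij_betw_byWitness[where f' = "\<lambda>(S, N, R). (N \<union> R, N)"])
    show "\<forall>p\<in>Pairs. (\<lambda>(S, N, R). (N \<union> R, N)) ((\<lambda>(M, N). (\<Union>N, N, M - N)) p) = p"
      unfolding Pairs_def by auto
    show "\<forall>q\<in>Parts. (\<lambda>(M, N). (\<Union>N, N, M - N)) ((\<lambda>(S, N, R). (N \<union> R, N)) q) = q"
    proof
      fix q assume "q \<in> Parts"
      then obtain S N R where q: "q = (S, N, R)" and N: "N \<in> matchings r S" and R: "R \<in> matchings r (U - S)"
        unfolding Parts_def by blast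
      have "N \<inter> R = {}"
        using matchings_disjoint[OF r N R] by blast
      then have "N \<union> R - N = R"
        by blast
      moreover have "\<Union>N = S"
        using N by (simp add: matchings_def)
      ultimately show "(\<lambda>(M, N). (\<Union>N, N, M - N)) ((\<lambda>(S, N, R). (N \<union> R, N)) q) = q"
        using q by simp
    qed
    show "(\<lambda>(M, N). (\<Union>N, N, M - N)) ` Pairs \<subseteq> Parts"
    proof clarify
      fix M N assume "(M, N) \<in> Pairs"
      then have M: "M \<in> matchings r U" and NM: "N \<subseteq> M" and "card N = k" "Q N"
        unfolding Pairs_def by auto
      have N: "N \<in> matchings r (\<Union>N)"
        using matching_subset[OF M NM] .
      have "\<Union>N \<subseteq> U"
        using NM matchings_edge_subset[OF M] by blast
      moreover have "card (\<Union>N) = r * k"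
        using card_ground_matching[OF finite_subset[OF \<open>\<Union>N \<subseteq> U\<close> U] N] \<open>card N = k\<close> by simp
      ultimately show "(\<Union>N, N, M - N) \<in> Parts"
        unfolding Parts_def Ss_def using N \<open>Q N\<close> matchings_Diff[OF M NM] by simp
    qed
    show "(\<lambda>(S, N, R). (N \<union> R, N)) ` Parts \<subseteq> Pairs"
    proof clarify
      fix S N R assume "(S, N, R) \<in> Parts"
      then have S: "S \<subseteq> U" "card S = r * k" and N: "N \<in> matchings r S" "Q N"
        and R: "R \<in> matchings r (U - S)"
        unfolding Parts_def Ss_def by auto
      have "N \<union> R \<in> matchings r (S \<union> (U - S))"
        by (rule matchings_Un[OF N(1) R]) blast
      moreover have "S \<union> (U - S) = U"
        using S by blast
      moreover have "card N = k"
        using card_ground_matching[OF finite_subset[OF S(1) U] N(1)] S(2) r by simp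
      ultimately show "(N \<union> R, N) \<in> Pairs"
        unfolding Pairs_def using N(2) by simp
    qed
  qed
  then have "card Pairs = card Parts"
    by (rule bij_betw_same_card)
  also have "\<dots> = (\<Sum>S\<in>Ss. card {N \<in> matchings r S. Q N} * card (matchings r (U - S)))"
  proof -
    have "finite Ss"
      unfolding Ss_def using U by simp
    moreover have "finite ({N \<in> matchings r S. Q N} \<times> matchings r (U - S))" if "S \<in> Ss" for S
    proof -
      have "finite S"
        using that U unfolding Ss_def by (blast intro: finite_subset)
      then have "finite {N \<in> matchings r S. Q N}"
        by (rule finite_subset[OF _ finite_matchings, rotated]) blast
      then show ?thesis
        by (rule finite_cartesian_product) (rule finite_matchings, use U in simp)
    qed
    ultimately show ?thesis
      unfolding Parts_def by (simp add: card_cartesian_product)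
  qed
  finally show ?thesis
    unfolding Pairs_def Ss_def .
qed

lemma order_invariant_True: "order_invariant (\<lambda>_. True)"
  by (simp add: order_invariant_def)

lemma card_sub_matching_pairs:
  assumes r: "r > 0" and Q: "order_invariant Q"
  shows "card {(M, N). M \<in> ord_matchings r n \<and> N \<subseteq> M \<and> card N = k \<and> Q N}
    = (r*n choose (r*k)) * card {N \<in> ord_matchings r k. Q N} * card (ord_matchings r (n - k))"
proof -
  let ?U = "{0..<r*n}"
  let ?Ss = "{S. S \<subseteq> ?U \<and> card S = r * k}"
  have "card {N \<in> matchings r S. Q N} * card (matchings r (?U - S))
      = card {N \<in> ord_matchings r k. Q N} * card (ord_matchings r (n - k))" if "S \<in> ?Ss" for S
  proof -
    have S: "S \<subseteq> ?U" "card S = r * k"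
      using that by auto
    then have "finite S"
      using finite_subset by blast
    moreover have "card (?U - S) = r * (n - k)"
      using card_Diff_subset[OF \<open>finite S\<close> S(1)] S(2) by (simp add: diff_mult_distrib2)
    ultimately show ?thesis
      using S(2) card_matchings_order_invariant[OF _ Q, of S r]
        card_matchings_order_invariant[OF _ order_invariant_True, of "?U - S" r]
      by (simp add: ord_matchings_eq_matchings[OF r])
  qed
  then have "(\<Sum>S\<in>?Ss. card {N \<in> matchings r S. Q N} * card (matchings r (?U - S)))
      = card ?Ss * (card {N \<in> ord_matchings r k. Q N} * card (ord_matchings r (n - k)))"
    by simp
  moreover have "card ?Ss = r*n choose (r*k)"
    using n_subsets[of ?U "r*k"] by simp
  ultimately show ?thesis
    using card_sub_matching_pairs_sum[OF r, of ?U k Q] by (simp add: ord_matchings_eq_matchings[OF r])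
qed

lemma card_ord_matchings_mult_choose:
  assumes r: "r > 0"
  shows "card (ord_matchings r n) * (n choose k)
    = (r*n choose (r*k)) * card (ord_matchings r k) * card (ord_matchings r (n - k))"
proof -
  have M: "finite M" "card M = n" if "M \<in> ord_matchings r n" for M
    using finite_ord_matching[OF that] that by (simp_all add: ord_matchings_def)
  have "card (Sigma (ord_matchings r n) (\<lambda>M. {N. N \<subseteq> M \<and> card N = k}))
      = (\<Sum>M\<in>ord_matchings r n. card {N. N \<subseteq> M \<and> card N = k})"
    using M(1) by (intro card_SigmaI finite_ord_matchings) simp
  also have "\<dots> = (\<Sum>M\<in>ord_matchings r n. n choose k)"
    using M by (intro sum.cong) (simp_all add: n_subsets)
  also have "\<dots> = card (ord_matchings r n) * (n choose k)"
    by simp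
  finally have "card (Sigma (ord_matchings r n) (\<lambda>M. {N. N \<subseteq> M \<and> card N = k}))
      = card (ord_matchings r n) * (n choose k)" .
  moreover have "Sigma (ord_matchings r n) (\<lambda>M. {N. N \<subseteq> M \<and> card N = k})
      = {(M, N). M \<in> ord_matchings r n \<and> N \<subseteq> M \<and> card N = k \<and> True}"
    by auto
  ultimately show ?thesis
    using card_sub_matching_pairs[OF r order_invariant_True, of n k] by simp
qed

lemma one_le_card_ord_matchings: "M \<in> ord_matchings r k \<Longrightarrow> 1 \<le> card (ord_matchings r k)"
  using finite_ord_matchings[of r k] by (auto simp: Suc_le_eq card_gt_0_iff)

lemma fact_power_le_card_ord_matchings:
  assumes r: "r > 0"
  shows "fact n ^ (r - 1) \<le> card (ord_matchings r n)"
proof (induction n)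
  case 0
  have "{} \<in> ord_matchings r 0"
    by (simp add: ord_matchings_def)
  then have "1 \<le> card (ord_matchings r 0)"
    by (rule one_le_card_ord_matchings)
  then show ?case
    by simp
next
  case (Suc n)
  txt \<open>|M(n+1)| * (n+1) = (r*(n+1) choose r) * |M(1)| * |M(n)| and the binomial is at least (n+1)^r.\<close>
  have "{{0..<r}} \<in> ord_matchings r 1"
    by (simp add: ord_matchings_def)
  then have one: "1 \<le> card (ord_matchings r 1)"
    by (rule one_le_card_ord_matchings)
  have "real (r * Suc n) / real r = real (Suc n)"
    using r by (simp add: field_simps)
  then have "real (Suc n) ^ r = (real (r * Suc n) / real r) ^ r"
    by simp
  also have "\<dots> \<le> real (r * Suc n choose r)"
    by (rule binomial_ge_n_over_k_pow_k) simp
  finally have binom: "Suc n ^ r \<le> r * Suc n choose r"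
    by (simp only: of_nat_le_iff of_nat_power[symmetric])
  have "Suc n ^ r = Suc n * Suc n ^ (r - 1)"
    using r by (cases r) simp_all
  then have "fact (Suc n) ^ (r - 1) * Suc n = Suc n ^ r * fact n ^ (r - 1)"
    by (simp only: fact_Suc of_nat_id power_mult_distrib ac_simps)
  also have "\<dots> \<le> (r * Suc n choose r) * (card (ord_matchings r 1) * card (ord_matchings r n))"
    using binom mult_le_mono[OF one Suc.IH] by (intro mult_mono) simp_all
  also have "\<dots> = card (ord_matchings r (Suc n)) * Suc n"
    using card_ord_matchings_mult_choose[OF r, of "Suc n" 1] by simp
  finally show ?case
    by (simp only: mult_le_cancel2)
qed

lemma card_ord_matchings_pos:
  assumes "r > 0"
  shows "card (ord_matchings r n) > 0"
proof -
  have "(0::nat) < fact n ^ (r - 1)"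
    by simp
  then show ?thesis
    using fact_power_le_card_ord_matchings[OF assms, of n] by linarith
qed

lemma choose_div_card_ord_matchings_le:
  assumes r: "r > 0"
  shows "real (n choose k) / real (card (ord_matchings r k)) \<le> real n ^ k / fact k ^ r"
proof -
  have "real (fact k ^ (r - 1)) \<le> real (card (ord_matchings r k))"
    using fact_power_le_card_ord_matchings[OF r, of k] by (simp only: of_nat_le_iff)
  then have "real (n choose k) / real (card (ord_matchings r k)) \<le> real (n choose k) / fact k ^ (r - 1)"
    using card_ord_matchings_pos[OF r, of k] by (intro divide_left_mono) simp_all
  also have "\<dots> = real (n choose k) * fact k / fact k ^ r"
    using r by (cases r) simp_all
  also have "\<dots> \<le> real n ^ k / fact k ^ r"
  proof -
    have "real ((n choose k) * fact k) \<le> real (n ^ k)"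
      using binomial_fact_pow[of n k] by (simp only: of_nat_le_iff)
    then show ?thesis
      by (intro divide_right_mono) simp_all
  qed
  finally show ?thesis .
qed

lemma prob_RM_le_1: "prob_RM r n Q \<le> 1"
proof -
  have "card {M \<in> ord_matchings r n. Q M} \<le> card (ord_matchings r n)"
    by (rule card_mono[OF finite_ord_matchings]) blast
  then show ?thesis
    unfolding prob_RM_def by (cases "card (ord_matchings r n) = 0") simp_all
qed

lemma prob_RM_Not:
  assumes "r > 0"
  shows "prob_RM r n (\<lambda>M. \<not> Q M) = 1 - prob_RM r n Q"
proof -
  have "ord_matchings r n = {M \<in> ord_matchings r n. Q M} \<union> {M \<in> ord_matchings r n. \<not> Q M}"
    by blast
  then have "card (ord_matchings r n) = card {M \<in> ord_matchings r n. Q M} + card {M \<in> ord_matchings r n. \<not> Q M}"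
    using finite_ord_matchings[of r n] by (metis (no_types, lifting) card_Un_disjoint disjoint_iff finite_Un mem_Collect_eq)
  then have "real (card {M \<in> ord_matchings r n. \<not> Q M})
      = real (card (ord_matchings r n)) - real (card {M \<in> ord_matchings r n. Q M})"
    by simp
  then show ?thesis
    using card_ord_matchings_pos[OF assms, of n] unfolding prob_RM_def by (simp add: diff_divide_distrib)
qed

lemma obtain_clique_with_card:
  assumes "finite M" "k \<le> z_clique P M"
  obtains N where "N \<subseteq> M" "card N = k" "is_clique P N"
proof -
  let ?Z = "card ` {N. N \<subseteq> M \<and> is_clique P N}"
  have "finite ?Z"
    using assms(1) by simp
  moreover have "{} \<in> {N. N \<subseteq> M \<and> is_clique P N}"
    by (simp add: is_clique_def)
  ultimately have "z_clique P M \<in> ?Z"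
    unfolding z_clique_def by (intro Max_in) blast+
  then obtain N where N: "N \<subseteq> M" "is_clique P N" "card N = z_clique P M"
    by auto
  then obtain T where "T \<subseteq> N" "card T = k"
    using obtain_subset_with_card_n[of k N] assms(2) by auto
  moreover have "is_clique P T"
    using N(2) \<open>T \<subseteq> N\<close> unfolding is_clique_def by blast
  ultimately show ?thesis
    using N(1) that by blast
qed

lemma prob_RM_clique_number_ge_le:
  assumes r: "r > 0"
  shows "prob_RM r n (\<lambda>M. k \<le> z_clique P M)
    \<le> real (a_clique r P k) * real (n choose k) / real (card (ord_matchings r k))"
proof -
  define Pairs where "Pairs = {(M, N). M \<in> ord_matchings r n \<and> N \<subseteq> M \<and> card N = k \<and> is_clique P N}"
  have "Pairs \<subseteq> Sigma (ord_matchings r n) Pow"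
    unfolding Pairs_def by auto
  moreover have "finite (Sigma (ord_matchings r n) Pow)"
    using finite_ord_matching by (intro finite_SigmaI finite_ord_matchings) simp
  ultimately have fin: "finite Pairs"
    by (rule finite_subset)
  have "{M \<in> ord_matchings r n. k \<le> z_clique P M} \<subseteq> fst ` Pairs"
  proof
    fix M assume M: "M \<in> {M \<in> ord_matchings r n. k \<le> z_clique P M}"
    then have "finite M" "k \<le> z_clique P M"
      using finite_ord_matching by auto
    then obtain N where "N \<subseteq> M" "card N = k" "is_clique P N"
      by (rule obtain_clique_with_card)
    then have "(M, N) \<in> Pairs"
      using M unfolding Pairs_def by simp
    then show "M \<in> fst ` Pairs"
      by (rule rev_image_eqI) simp
  qed
  then have "card {M \<in> ord_matchings r n. k \<le> z_clique P M} \<le> card (fst ` Pairs)"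
    using fin by (intro card_mono finite_imageI)
  also have "\<dots> \<le> card Pairs"
    using fin by (rule card_image_le)
  also have "\<dots> = (r*n choose (r*k)) * a_clique r P k * card (ord_matchings r (n - k))"
    unfolding Pairs_def a_clique_def by (rule card_sub_matching_pairs[OF r order_invariant_is_clique])
  finally have "card {M \<in> ord_matchings r n. k \<le> z_clique P M}
      \<le> (r*n choose (r*k)) * a_clique r P k * card (ord_matchings r (n - k))" .
  then have "card {M \<in> ord_matchings r n. k \<le> z_clique P M} * card (ord_matchings r k)
      \<le> (r*n choose (r*k)) * a_clique r P k * card (ord_matchings r (n - k)) * card (ord_matchings r k)"
    by (rule mult_le_mono1)
  also have "\<dots> = a_clique r P k * (card (ord_matchings r n) * (n choose k))"
    using card_ord_matchings_mult_choose[OF r, of n k] by (simp add: ac_simps)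
  finally have "real (card {M \<in> ord_matchings r n. k \<le> z_clique P M}) * real (card (ord_matchings r k))
      \<le> real (a_clique r P k) * real (n choose k) * real (card (ord_matchings r n))"
    by (simp only: of_nat_mult[symmetric] of_nat_le_iff ac_simps)
  then show ?thesis
    using card_ord_matchings_pos[OF r] unfolding prob_RM_def by (simp add: field_simps)
qed

lemma pow_le_exp_mult_fact: "real k ^ k \<le> exp (real k) * fact k"
proof -
  have exp: "(\<lambda>n. real k ^ n /\<^sub>R fact n) sums exp (real k)"
    by (rule exp_converges)
  have "sum (\<lambda>n. real k ^ n /\<^sub>R fact n) {k} \<le> suminf (\<lambda>n. real k ^ n /\<^sub>R fact n)"
    by (rule sum_le_suminf[OF sums_summable[OF exp]]) simp_all
  also have "\<dots> = exp (real k)"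
    using exp by (rule sums_unique[symmetric])
  finally have "real k ^ k / fact k \<le> exp (real k)"
    by (simp add: divide_inverse_commute)
  then show ?thesis
    by (simp add: divide_le_eq mult.commute)
qed

lemma clique_bound_le_half_power:
  fixes C x :: real
  assumes k: "k > 0" and C: "C > 0" and n: "2 * C * exp (real r) * real n \<le> real k powr (real r - x)"
  shows "C ^ k * real k powr (real k * x) * real n ^ k / fact k ^ r \<le> (1/2) ^ k"
proof -
  have "(2 * C * exp (real r) * real n) ^ k * real k powr (real k * x)
      \<le> (real k powr (real r - x)) ^ k * real k powr (real k * x)"
    using n C by (intro mult_right_mono power_mono) simp_all
  also have "\<dots> = real k powr (real k * (real r - x)) * real k powr (real k * x)"
    using k by (simp add: powr_power)
  also have "\<dots> = real k powr real (k * r)"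
    by (simp add: powr_add[symmetric] algebra_simps)
  also have "\<dots> = real k ^ (k * r)"
    by (rule powr_realpow) (use k in simp)
  also have "\<dots> = (real k ^ k) ^ r"
    by (rule power_mult)
  also have "\<dots> \<le> (exp (real k) * fact k) ^ r"
    by (intro power_mono pow_le_exp_mult_fact) simp
  also have "\<dots> = exp (real r) ^ k * fact k ^ r"
    by (simp add: power_mult_distrib exp_of_nat_mult[symmetric] mult.commute)
  finally have "2 ^ k * (C ^ k * real k powr (real k * x) * real n ^ k) \<le> fact k ^ r"
    by (simp add: power_mult_distrib ac_simps)
  then show ?thesis
    by (simp add: field_simps)
qed

lemma prob_RM_clique_number_gt_le:
  fixes C x K :: real
  assumes r: "r > 0" and C: "C > 0" and x: "x \<le> real r"
    and a: "\<forall>k\<ge>2. real (a_clique r P k) \<le> C ^ k * real k powr (real k * x)"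
    and K: "K \<ge> 2" and n: "2 * C * exp (real r) * real n \<le> K powr (real r - x)"
  shows "1 - prob_RM r n (\<lambda>M. real (z_clique P M) \<le> K) \<le> 1 / K"
proof -
  define k where "k = nat \<lfloor>K\<rfloor> + 1"
  have kK: "K < real k" and k2: "k \<ge> 2"
    using K unfolding k_def by linarith+
  have "0 \<le> \<lfloor>K\<rfloor>"
    using K by simp
  then have "K < real m \<longleftrightarrow> k \<le> m" for m
    using floor_less_iff[of K "int m"] nat_less_iff[of "\<lfloor>K\<rfloor>" m] unfolding k_def by (simp add: Suc_le_eq)
  then have event: "(\<lambda>M. \<not> real (z_clique P M) \<le> K) = (\<lambda>M. k \<le> z_clique P M)"
    by (simp add: not_le)
  have "1 - prob_RM r n (\<lambda>M. real (z_clique P M) \<le> K) = prob_RM r n (\<lambda>M. k \<le> z_clique P M)"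
    using prob_RM_Not[OF r, of n "\<lambda>M. real (z_clique P M) \<le> K"] event by simp
  also have "\<dots> \<le> real (a_clique r P k) * (real (n choose k) / real (card (ord_matchings r k)))"
    using prob_RM_clique_number_ge_le[OF r] by simp
  also have "\<dots> \<le> C ^ k * real k powr (real k * x) * (real n ^ k / fact k ^ r)"
    using a k2 C choose_div_card_ord_matchings_le[OF r] by (intro mult_mono) simp_all
  also have "\<dots> \<le> (1/2) ^ k"
  proof -
    have "K powr (real r - x) \<le> real k powr (real r - x)"
      using kK K x by (intro powr_mono2) simp_all
    then show ?thesis
      using clique_bound_le_half_power[of k C r n x] k2 C n by simp
  qed
  also have "\<dots> \<le> 1 / K"
  proof -
    have "real k < real (2 ^ k)"
      using less_exp[of k] by (simp only: of_nat_less_iff)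
    then have "real k < 2 ^ k"
      by simp
    then have "K < 2 ^ k"
      using kK by linarith
    then show ?thesis
      using K by (simp add: field_simps)
  qed
  finally show ?thesis .
qed

lemma LIMSEQ_one_if_deficit_le:
  fixes f g :: "nat \<Rightarrow> real"
  assumes "\<And>n. f n \<le> 1" and "eventually (\<lambda>n. 1 - f n \<le> g n) sequentially" and "g \<longlonglongrightarrow> 0"
  shows "f \<longlonglongrightarrow> 1"
proof (rule tendsto_sandwich[OF _ _ _ tendsto_const])
  show "eventually (\<lambda>n. 1 - g n \<le> f n) sequentially"
    using assms(2) by (simp add: algebra_simps)
  show "eventually (\<lambda>n. f n \<le> 1) sequentially"
    using assms(1) by simp
  show "(\<lambda>n. 1 - g n) \<longlonglongrightarrow> 1"
    using tendsto_diff[OF tendsto_const assms(3), of 1] by simp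
qed

lemma prob_RM_clique_number_le_power_deficit:
  fixes C x :: real
  assumes r: "r > 0" and C: "C > 0" and x: "x < real r"
    and a: "\<forall>k\<ge>2. real (a_clique r P k) \<le> C ^ k * real k powr (real k * x)"
  obtains c where "c > 0" and "\<And>n. n \<ge> 1 \<Longrightarrow>
    1 - prob_RM r n (\<lambda>M. real (z_clique P M) \<le> c * real n powr (1 / (real r - x)))
      \<le> real n powr (- (1 / (real r - x))) / c"
proof -
  define y where "y = real r - x"
  have y: "y > 0"
    using x unfolding y_def by simp
  define c where "c = max 2 ((2 * C * exp (real r)) powr (1 / y))"
  have c: "c \<ge> 2"
    unfolding c_def by simp
  have "2 * C * exp (real r) = ((2 * C * exp (real r)) powr (1 / y)) powr y"
    using C y by (simp add: powr_powr)
  also have "\<dots> \<le> c powr y"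
    unfolding c_def using y by (intro powr_mono2) simp_all
  finally have cy: "2 * C * exp (real r) \<le> c powr y" .
  have deficit: "1 - prob_RM r n (\<lambda>M. real (z_clique P M) \<le> c * real n powr (1 / y))
      \<le> real n powr (- (1 / y)) / c" if "n \<ge> 1" for n
  proof -
    have "c * 1 \<le> c * real n powr (1 / y)"
      using that y c by (intro mult_left_mono ge_one_powr_ge_zero) simp_all
    then have "2 \<le> c * real n powr (1 / y)"
      using c by linarith
    moreover have "(c * real n powr (1 / y)) powr y = c powr y * real n"
      using c y by (simp add: powr_mult powr_powr)
    then have "2 * C * exp (real r) * real n \<le> (c * real n powr (1 / y)) powr y"
      using cy by (simp add: mult_right_mono)
    ultimately have "1 - prob_RM r n (\<lambda>M. real (z_clique P M) \<le> c * real n powr (1 / y))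
        \<le> 1 / (c * real n powr (1 / y))"
      using prob_RM_clique_number_gt_le[OF r C _ a] x unfolding y_def by simp
    also have "\<dots> = real n powr (- (1 / y)) / c"
      by (simp add: powr_minus divide_inverse mult.commute)
    finally show ?thesis .
  qed
  show ?thesis
  proof (rule that)
    show "c > 0"
      using c by simp
    fix n :: nat assume "n \<ge> 1"
    then show "1 - prob_RM r n (\<lambda>M. real (z_clique P M) \<le> c * real n powr (1 / (real r - x)))
        \<le> real n powr (- (1 / (real r - x))) / c"
      using deficit unfolding y_def by blast
  qed
qed

theorem lemma3p2:
  fixes r :: nat and P :: "nat set set set" and C x :: real
  assumes "r \<ge> 2"
    and "P \<subseteq> r_patterns r"
    and "C > 0" and "0 \<le> x" and "x < real r"
    and "\<forall>k\<ge>2. real (a_clique r P k) \<le> C ^ k * real k powr (real k * x)"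
  shows "\<exists>C''>0. (\<lambda>n. prob_RM r n (\<lambda>M. real (z_clique P M) \<le> C'' * real n powr (1 / (real r - x))))
            \<longlonglongrightarrow> 1"
proof -
  have r: "r > 0"
    using assms(1) by simp
  obtain c where c: "c > 0" and deficit: "\<And>n. n \<ge> 1 \<Longrightarrow>
      1 - prob_RM r n (\<lambda>M. real (z_clique P M) \<le> c * real n powr (1 / (real r - x)))
        \<le> real n powr (- (1 / (real r - x))) / c"
    using prob_RM_clique_number_le_power_deficit[OF r assms(3,5,6)] by blast
  have "(\<lambda>n. real n powr (- (1 / (real r - x))) / c) \<longlonglongrightarrow> 0"
    using assms(5) by (intro tendsto_divide_zero tendsto_neg_powr filterlim_real_sequentially) simp
  moreover have "eventually (\<lambda>n. 1 - prob_RM r n (\<lambda>M. real (z_clique P M) \<le> c * real n powr (1 / (real r - x)))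
      \<le> real n powr (- (1 / (real r - x))) / c) sequentially"
    using eventually_ge_at_top[of 1] by (rule eventually_mono) (rule deficit)
  ultimately have "(\<lambda>n. prob_RM r n (\<lambda>M. real (z_clique P M) \<le> c * real n powr (1 / (real r - x)))) \<longlonglongrightarrow> 1"
    by (intro LIMSEQ_one_if_deficit_le[OF prob_RM_le_1])
  then show ?thesis
    using c by blast
qed

end
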